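(* Let $\Gamma$ be a non-abelian $2$-generated finite $p$-group ($p$ odd) with cyclic derived subgroup and $\mathrm{inv}(\Gamma)=(p,m,n_1,n_2,o_1,o_2,o'_1,o'_2,u_1,u_2)$, satisfying $o_1\ne o_2$, $0<\max(o'_1,o'_2)<m$ and $n_2\ge2$. Then the natural projection $$\Delta_\Gamma:\frac{\mathcal I(\Gamma')k\Gamma}{\mathcal I(\Gamma')\mathcal I(\Gamma)}\to\frac{\mathcal I(\Gamma')k\Gamma+\mathcal I(\Gamma)^3}{\mathcal I(\Gamma)^3},\quad x+\mathcal I(\Gamma')\mathcal I(\Gamma)\mapsto x+\mathcal I(\Gamma)^3,$$ is a well-defined isomorphism of $k$-vector spaces (both spaces being one-dimensional).
   Context: $k=\mathbb F_p$, $\mathcal I(X)$ is the augmentation ideal of $kX$, $\Gamma'$ the derived subgroup. For a list $I=(p,m,n_1,n_2,o_1,o_2,o'_1,o'_2,u_1,u_2)$ of non-negative integers let $\mathcal G_I=\langle b_1,b_2 \mid a=[b_2,b_1],\ a^{p^m}=1,\ a^{b_i}=a^{r_i},\ b_i^{p^{n_i}}=a^{u_ip^{m-o'_i}}\ (i=1,2)\rangle$, where $[g,h]=g^{-1}h^{-1}gh$, $a^{b}=b^{-1}ab$, $r_1=1+p^{m-o_1}$, and $r_2=1+p^{m-o_2}$ if $o_2>o_1$, $r_2=r_1^{p^{o_1-o_2}}$ otherwise. By a known classification, for every non-abelian $2$-generated finite $p$-group $\Gamma$ with cyclic derived subgroup there is a unique such list $I$ satisfying conditions (I)–(VI) below with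 $\Gamma\cong\mathcal G_I$; it is denoted $\mathrm{inv}(\Gamma)$. (I) $n_1\ge n_2\ge1$. (II) $0\le o_i<\min(m,n_i)$, $0\le o'_i\le m-o_i$ and $p\nmid u_i$ for $i=1,2$. (III) One of: (a) $o_1=0$ and $o'_1\le o'_2\le o'_1+o_2+n_1-n_2$; (b) $o_2=0<o_1$, $n_2<n_1$ and $o'_1+\min(0,n_1-n_2-o_1)\le o'_2\le o'_1+n_1-n_2$; (c) $0<o_2<o_1<o_2+n_1-n_2$ and $o'_1\le o'_2\le o'_1+n_1-n_2$. (IV) $o_2+o'_1\le m\le n_1$ and one of: (a) $o_1+o'_2\le m\le n_2$; (b) $2m-o_1-o'_2=n_2<m$ and $u_2\equiv1 \pmod{p^{m-n_2}}$. (V) $1\le u_1\le p^{a_1}$, where $a_1=\min(o'_1,\ o_2+\min(n_1-n_2+o'_1-o'_2,0))$. (VI) One of: (a) $1\le u_2\le p^{a_2}$; (b) $o_1o_2\ne0$, $n_1-n_2+o'_1-o'_2=0<a_1$, $1+p^{a_2}\le u_2\le 2p^{a_2}$ and $u_1\equiv1\pmod p$; where $a_2=0$ if $o_1=0$; $a_2=\min(o_1,\,o'_2,\,o'_2-o'_1+\max(0,o_1+n_2-n_1))$ if $o_2=0<o_1$; and $a_2=\min(o_1-o_2,\,o'_2-o'_1)$ otherwise. *)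

theory Defs
  imports "HOL-Algebra.Algebra"
begin

definition commut :: "('a, 'b) monoid_scheme \<Rightarrow> 'a \<Rightarrow> 'a \<Rightarrow> 'a" where
  "commut G g h = inv\<^bsub>G\<^esub> g \<otimes>\<^bsub>G\<^esub> inv\<^bsub>G\<^esub> h \<otimes>\<^bsub>G\<^esub> g \<otimes>\<^bsub>G\<^esub> h"

definition conjg :: "('a, 'b) monoid_scheme \<Rightarrow> 'a \<Rightarrow> 'a \<Rightarrow> 'a" where
  "conjg G a b = inv\<^bsub>G\<^esub> b \<otimes>\<^bsub>G\<^esub> a \<otimes>\<^bsub>G\<^esub> b"

definition is_p_group :: "nat \<Rightarrow> ('a, 'b) monoid_scheme \<Rightarrow> bool" where
  "is_p_group p G \<longleftrightarrow> group G \<and> finite (carrier G) \<and> (\<exists>n. card (carrier G) = p ^ n)"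

definition two_generated :: "('a, 'b) monoid_scheme \<Rightarrow> bool" where
  "two_generated G \<longleftrightarrow> (\<exists>x\<in>carrier G. \<exists>y\<in>carrier G. generate G {x, y} = carrier G)"

definition cyclic_subgroup :: "('a, 'b) monoid_scheme \<Rightarrow> 'a set \<Rightarrow> bool" where
  "cyclic_subgroup G H \<longleftrightarrow> (\<exists>g\<in>H. H = generate G {g})"

definition r1_of :: "nat \<Rightarrow> nat \<Rightarrow> nat \<Rightarrow> nat" where
  "r1_of p m o1 = 1 + p ^ (m - o1)"

definition r2_of :: "nat \<Rightarrow> nat \<Rightarrow> nat \<Rightarrow> nat \<Rightarrow> nat" where
  "r2_of p m o1 o2 = (if o2 > o1 then 1 + p ^ (m - o2) else (r1_of p m o1) ^ (p ^ (o1 - o2)))"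

definition pres_rel ::
  "nat \<Rightarrow> nat \<Rightarrow> nat \<Rightarrow> nat \<Rightarrow> nat \<Rightarrow> nat \<Rightarrow> nat \<Rightarrow> nat \<Rightarrow> nat \<Rightarrow> nat
   \<Rightarrow> ('c, 'd) monoid_scheme \<Rightarrow> 'c \<Rightarrow> 'c \<Rightarrow> bool" where
  "pres_rel p m n1 n2 o1 o2 o1' o2' u1 u2 H b1 b2 \<longleftrightarrow>
     b1 \<in> carrier H \<and> b2 \<in> carrier H \<and>
     (let a = commut H b2 b1 in
        a [^]\<^bsub>H\<^esub> (p ^ m) = \<one>\<^bsub>H\<^esub> \<and>
        conjg H a b1 = a [^]\<^bsub>H\<^esub> r1_of p m o1 \<and>
        conjg H a b2 = a [^]\<^bsub>H\<^esub> r2_of p m o1 o2 \<and>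
        b1 [^]\<^bsub>H\<^esub> (p ^ n1) = a [^]\<^bsub>H\<^esub> (u1 * p ^ (m - o1')) \<and>
        b2 [^]\<^bsub>H\<^esub> (p ^ n2) = a [^]\<^bsub>H\<^esub> (u2 * p ^ (m - o2')))"

text \<open>G is isomorphic to the finitely presented group G_I, with b1, b2 corresponding to the
  generators: G is generated by b1, b2, these satisfy the relations, and the universal property
  of the presentation holds (tested against all groups whose carrier is a set of naturals; since
  G_I is countable this is equivalent to G being isomorphic to G_I).\<close>
definition is_presented_by ::
  "nat \<Rightarrow> nat \<Rightarrow> nat \<Rightarrow> nat \<Rightarrow> nat \<Rightarrow> nat \<Rightarrow> nat \<Rightarrow> nat \<Rightarrow> nat \<Rightarrow> nat
   \<Rightarrow> ('a, 'b) monoid_scheme \<Rightarrow> bool" where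
  "is_presented_by p m n1 n2 o1 o2 o1' o2' u1 u2 G \<longleftrightarrow>
     group G \<and>
     (\<exists>b1 b2. pres_rel p m n1 n2 o1 o2 o1' o2' u1 u2 G b1 b2 \<and>
        generate G {b1, b2} = carrier G \<and>
        (\<forall>(H :: nat monoid) h1 h2. group H \<and> pres_rel p m n1 n2 o1 o2 o1' o2' u1 u2 H h1 h2
           \<longrightarrow> (\<exists>\<phi>\<in>hom G H. \<phi> b1 = h1 \<and> \<phi> b2 = h2)))"

text \<open>Conditions (I)-(VI) of the classification, with all quantities read as integers.\<close>
definition a1_of :: "int \<Rightarrow> int \<Rightarrow> int \<Rightarrow> int \<Rightarrow> int \<Rightarrow> int" where
  "a1_of n1 n2 o2 o1' o2' = min o1' (o2 + min (n1 - n2 + o1' - o2') 0)"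

definition a2_of :: "int \<Rightarrow> int \<Rightarrow> int \<Rightarrow> int \<Rightarrow> int \<Rightarrow> int \<Rightarrow> int" where
  "a2_of n1 n2 o1 o2 o1' o2' =
     (if o1 = 0 then 0
      else if o2 = 0 then min o1 (min o2' (o2' - o1' + max 0 (o1 + n2 - n1)))
      else min (o1 - o2) (o2' - o1'))"

definition inv_conditions ::
  "nat \<Rightarrow> nat \<Rightarrow> nat \<Rightarrow> nat \<Rightarrow> nat \<Rightarrow> nat \<Rightarrow> nat \<Rightarrow> nat \<Rightarrow> nat \<Rightarrow> nat \<Rightarrow> bool" where
  "inv_conditions p' m' n1' n2' o1n o2n o1'n o2'n u1n u2n \<longleftrightarrow>
    (let p = int p'; m = int m'; n1 = int n1'; n2 = int n2'; o1 = int o1n; o2 = int o2n;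
         o1' = int o1'n; o2' = int o2'n; u1 = int u1n; u2 = int u2n;
         a1 = a1_of n1 n2 o2 o1' o2'; a2 = a2_of n1 n2 o1 o2 o1' o2' in
     \<comment> \<open>(I)\<close>
     n1 \<ge> n2 \<and> n2 \<ge> 1 \<and>
     \<comment> \<open>(II)\<close>
     (0 \<le> o1 \<and> o1 < min m n1 \<and> 0 \<le> o1' \<and> o1' \<le> m - o1 \<and> \<not> p dvd u1) \<and>
     (0 \<le> o2 \<and> o2 < min m n2 \<and> 0 \<le> o2' \<and> o2' \<le> m - o2 \<and> \<not> p dvd u2) \<and>
     \<comment> \<open>(III)\<close>
     ((o1 = 0 \<and> o1' \<le> o2' \<and> o2' \<le> o1' + o2 + n1 - n2) \<or>
      (o2 = 0 \<and> 0 < o1 \<and> n2 < n1 \<and> o1' + min 0 (n1 - n2 - o1) \<le> o2' \<and> o2' \<le> o1' + n1 - n2) \<or>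
      (0 < o2 \<and> o2 < o1 \<and> o1 < o2 + n1 - n2 \<and> o1' \<le> o2' \<and> o2' \<le> o1' + n1 - n2)) \<and>
     \<comment> \<open>(IV)\<close>
     (o2 + o1' \<le> m \<and> m \<le> n1 \<and>
      ((o1 + o2' \<le> m \<and> m \<le> n2) \<or>
       (2 * m - o1 - o2' = n2 \<and> n2 < m \<and> u2 mod (p ^ nat (m - n2)) = 1 mod (p ^ nat (m - n2))))) \<and>
     \<comment> \<open>(V): 1 \<le> u1 \<le> p^a1 (impossible when a1 < 0)\<close>
     (0 \<le> a1 \<and> 1 \<le> u1 \<and> u1 \<le> p ^ nat a1) \<and>
     \<comment> \<open>(VI)\<close>
     ((0 \<le> a2 \<and> 1 \<le> u2 \<and> u2 \<le> p ^ nat a2) \<or>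
      (o1 * o2 \<noteq> 0 \<and> n1 - n2 + o1' - o2' = 0 \<and> 0 < a1 \<and>
       0 \<le> a2 \<and> 1 + p ^ nat a2 \<le> u2 \<and> u2 \<le> 2 * p ^ nat a2 \<and> u1 mod p = 1 mod p)))"

definition grp_alg :: "('a, 'b) monoid_scheme \<Rightarrow> ('a \<Rightarrow> 'k::field) set" where
  "grp_alg G = {f. \<forall>x. x \<notin> carrier G \<longrightarrow> f x = 0}"

definition ga_add :: "('a \<Rightarrow> 'k::field) \<Rightarrow> ('a \<Rightarrow> 'k) \<Rightarrow> ('a \<Rightarrow> 'k)" where
  "ga_add f g = (\<lambda>x. f x + g x)"

definition ga_mult :: "('a, 'b) monoid_scheme \<Rightarrow> ('a \<Rightarrow> 'k::field) \<Rightarrow> ('a \<Rightarrow> 'k) \<Rightarrow> ('a \<Rightarrow> 'k)" where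
  "ga_mult G f g = (\<lambda>x. if x \<in> carrier G
      then (\<Sum>y\<in>carrier G. f y * g (inv\<^bsub>G\<^esub> y \<otimes>\<^bsub>G\<^esub> x)) else 0)"

definition aug_ideal :: "('a, 'b) monoid_scheme \<Rightarrow> 'a set \<Rightarrow> ('a \<Rightarrow> 'k::field) set" where
  "aug_ideal G H = {f \<in> grp_alg G. (\<forall>x. x \<notin> H \<longrightarrow> f x = 0) \<and> (\<Sum>x\<in>H. f x) = 0}"

definition set_mult ::
  "('a, 'b) monoid_scheme \<Rightarrow> ('a \<Rightarrow> 'k::field) set \<Rightarrow> ('a \<Rightarrow> 'k) set \<Rightarrow> ('a \<Rightarrow> 'k) set" where
  "set_mult G A B = {(\<lambda>x. \<Sum>i<n. ga_mult G (f i) (g i) x) | (n::nat) f g. \<forall>i<n. f i \<in> A \<and> g i \<in> B}"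

definition set_add :: "('a \<Rightarrow> 'k::field) set \<Rightarrow> ('a \<Rightarrow> 'k) set \<Rightarrow> ('a \<Rightarrow> 'k) set" where
  "set_add A B = {ga_add f g | f g. f \<in> A \<and> g \<in> B}"

definition coset_of :: "('a \<Rightarrow> 'k::field) \<Rightarrow> ('a \<Rightarrow> 'k) set \<Rightarrow> ('a \<Rightarrow> 'k) set" where
  "coset_of x B = {ga_add x y | y. y \<in> B}"

definition quot_sp :: "('a \<Rightarrow> 'k::field) set \<Rightarrow> ('a \<Rightarrow> 'k) set \<Rightarrow> ('a \<Rightarrow> 'k) set set" where
  "quot_sp A B = (\<lambda>x. coset_of x B) ` A"

definition nat_proj_welldef :: "('a \<Rightarrow> 'k::field) set \<Rightarrow> ('a \<Rightarrow> 'k) set \<Rightarrow> ('a \<Rightarrow> 'k) set \<Rightarrow> bool" where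
  "nat_proj_welldef A B D \<longleftrightarrow>
     (\<forall>x\<in>A. \<forall>y\<in>A. coset_of x B = coset_of y B \<longrightarrow> coset_of x D = coset_of y D)"

definition nat_proj ::
  "('a \<Rightarrow> 'k::field) set \<Rightarrow> ('a \<Rightarrow> 'k) set \<Rightarrow> ('a \<Rightarrow> 'k) set \<Rightarrow> ('a \<Rightarrow> 'k) set \<Rightarrow> ('a \<Rightarrow> 'k) set" where
  "nat_proj A B D Y = coset_of (SOME z. z \<in> A \<and> Y = coset_of z B) D"

end

theory Submission
  imports Defs "HOL-Library.Nat_Bijection"
begin

text \<open>Since \<open>\<Gamma>' = \<langle>g\<rangle>\<close> is cyclic, \<open>I(\<Gamma>') k\<Gamma> = k (g - 1) + I(\<Gamma>') I(\<Gamma>)\<close>, so the source of the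
  projection is spanned by the class of \<open>g - 1\<close>; and \<open>I(\<Gamma>') \<subseteq> I(\<Gamma>)\<^sup>2\<close> (because \<open>[x,y] - 1\<close> is a sum of
  products of two augmentation elements) gives \<open>I(\<Gamma>') I(\<Gamma>) \<subseteq> I(\<Gamma>)\<^sup>3\<close>, so the projection is well defined
  and onto. To see that \<open>g - 1 \<notin> I(\<Gamma>)\<^sup>3\<close>, note that \<open>o'\<^sub>1, o'\<^sub>2 < m\<close> let the defining relations hold
  in the Heisenberg group of unitriangular \<open>3 \<times> 3\<close> matrices over \<open>\<bbbF>\<^sub>p\<close>, with \<open>b\<^sub>1, b\<^sub>2\<close> the two elementary
  matrices and \<open>[b\<^sub>2, b\<^sub>1]\<close> central. The corner entry \<open>F\<close> of the resulting homomorphism satisfies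
  \<open>F(xy) = F(x) + F(y) + \<xi>(x) \<eta>(y)\<close> with additive \<open>\<xi>, \<eta>\<close>; its linear extension to \<open>k\<Gamma>\<close> vanishes on
  \<open>I(\<Gamma>)\<^sup>3\<close> and on \<open>I(\<Gamma>') I(\<Gamma>)\<close>, but not on \<open>[b\<^sub>2, b\<^sub>1] - 1\<close>, hence not on \<open>g - 1\<close>.\<close>

definition fun_subspace :: "('a \<Rightarrow> 'k::field) set \<Rightarrow> bool" where
  "fun_subspace V \<longleftrightarrow> (\<lambda>_. 0) \<in> V \<and> (\<forall>u\<in>V. \<forall>v\<in>V. (\<lambda>t. u t + v t) \<in> V) \<and> (\<forall>c. \<forall>u\<in>V. (\<lambda>t. c * u t) \<in> V)"

lemma fun_subspaceD:
  assumes "fun_subspace V"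
  shows fun_subspace_zero: "(\<lambda>_. 0) \<in> V"
    and fun_subspace_add: "u \<in> V \<Longrightarrow> v \<in> V \<Longrightarrow> (\<lambda>t. u t + v t) \<in> V"
    and fun_subspace_scale: "u \<in> V \<Longrightarrow> (\<lambda>t. c * u t) \<in> V"
  using assms by (auto simp: fun_subspace_def)

lemma fun_subspace_diff:
  assumes "fun_subspace V" "u \<in> V" "v \<in> V" shows "(\<lambda>t. u t - v t) \<in> V"
  using fun_subspace_add[OF assms(1,2) fun_subspace_scale[OF assms(1,3), of "-1"]] by simp

lemma fun_subspace_sum:
  assumes "fun_subspace V" "finite S" "\<And>i. i \<in> S \<Longrightarrow> h i \<in> V"
  shows "(\<lambda>t. \<Sum>i\<in>S. h i t) \<in> V"
  using assms(2,3)
proof (induction S rule: finite_induct)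
  case empty
  then show ?case using fun_subspace_zero[OF assms(1)] by simp
next
  case (insert x F)
  then show ?case using fun_subspace_add[OF assms(1), of "h x"] by simp
qed

lemma coset_of_iff: "z \<in> coset_of x V \<longleftrightarrow> (\<exists>v\<in>V. z = (\<lambda>t. x t + v t))"
  by (auto simp: coset_of_def ga_add_def)

lemma coset_ofI: "v \<in> V \<Longrightarrow> (\<lambda>t. x t + v t) \<in> coset_of x V"
  by (auto simp: coset_of_iff)

lemma coset_of_eq_iff:
  assumes "fun_subspace V"
  shows "coset_of x V = coset_of y V \<longleftrightarrow> (\<lambda>t. x t - y t) \<in> V"
proof
  assume eq: "coset_of x V = coset_of y V"
  have "x \<in> coset_of x V"
    using coset_ofI[OF fun_subspace_zero[OF assms], of x] by simp
  then obtain v where "v \<in> V" "x = (\<lambda>t. y t + v t)" unfolding eq coset_of_iff by blast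
  then show "(\<lambda>t. x t - y t) \<in> V" by simp
next
  have sub: "coset_of x V \<subseteq> coset_of y V" if xy: "(\<lambda>t. x t - y t) \<in> V" for x y
  proof
    fix z assume "z \<in> coset_of x V"
    then obtain v where v: "v \<in> V" "z = (\<lambda>t. x t + v t)" unfolding coset_of_iff by blast
    have "(\<lambda>t. y t + ((x t - y t) + v t)) \<in> coset_of y V"
      using fun_subspace_add[OF assms xy v(1)] by (rule coset_ofI)
    then show "z \<in> coset_of y V" using v(2) by simp
  qed
  assume xy: "(\<lambda>t. x t - y t) \<in> V"
  moreover have "(\<lambda>t. y t - x t) \<in> V" using fun_subspace_scale[OF assms xy, of "-1"] by simp
  ultimately show "coset_of x V = coset_of y V" using sub by blast
qed

lemma set_mult_iff:
  "u \<in> set_mult G M N \<longleftrightarrow>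
    (\<exists>(n::nat) f g. u = (\<lambda>t. \<Sum>i<n. ga_mult G (f i) (g i) t) \<and> (\<forall>i<n. f i \<in> M \<and> g i \<in> N))"
  by (simp add: set_mult_def)

lemma sum_lessThan_add: "(\<Sum>i<m + (n::nat). f i) = (\<Sum>i<m. f i) + (\<Sum>i<n. f (i + m))"
  by (induction n) (simp_all add: ac_simps)

lemma set_multI:
  "(\<And>i. i < (n::nat) \<Longrightarrow> f i \<in> M \<and> g i \<in> N) \<Longrightarrow>
    (\<lambda>t. \<Sum>i<n. ga_mult G (f i) (g i) t) \<in> set_mult G M N"
  unfolding set_mult_def by (rule CollectI, rule exI[of _ n], rule exI[of _ f], rule exI[of _ g]) simp

lemma set_add_iff: "u \<in> set_add A D \<longleftrightarrow> (\<exists>a\<in>A. \<exists>d\<in>D. u = (\<lambda>t. a t + d t))"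
  by (auto simp: set_add_def ga_add_def)

lemma ga_mult_scale_right: "ga_mult G f (\<lambda>t. c * g t) = (\<lambda>t. c * ga_mult G f g t)"
  unfolding ga_mult_def by (auto simp: sum_distrib_left algebra_simps)

lemma ga_mult_diff_left: "ga_mult G (\<lambda>t. f t - g t) h = (\<lambda>t. ga_mult G f h t - ga_mult G g h t)"
  unfolding ga_mult_def by (auto simp: sum_subtractf algebra_simps)

lemma ga_mult_diff_right: "ga_mult G f (\<lambda>t. g t - h t) = (\<lambda>t. ga_mult G f g t - ga_mult G f h t)"
  unfolding ga_mult_def by (auto simp: sum_subtractf algebra_simps)

text \<open>Scalars are absorbed into the right-hand factors, so \<open>M\<close> need not be a subspace.\<close>
lemma fun_subspace_set_mult:
  assumes "fun_subspace N" shows "fun_subspace (set_mult G M N)"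
  unfolding fun_subspace_def
proof (intro conjI ballI allI)
  show "(\<lambda>_. 0) \<in> set_mult G M N"
    using set_multI[of 0 "\<lambda>_ _. 0" M "\<lambda>_ _. 0" N G] by simp
next
  fix u v assume "u \<in> set_mult G M N" "v \<in> set_mult G M N"
  then obtain n n' :: nat and f g f' g'
    where u: "u = (\<lambda>t. \<Sum>i<n. ga_mult G (f i) (g i) t)" "\<forall>i<n. f i \<in> M \<and> g i \<in> N"
      and v: "v = (\<lambda>t. \<Sum>i<n'. ga_mult G (f' i) (g' i) t)" "\<forall>i<n'. f' i \<in> M \<and> g' i \<in> N"
    unfolding set_mult_iff by blast
  define f'' where "f'' i = (if i < n then f i else f' (i - n))" for i
  define g'' where "g'' i = (if i < n then g i else g' (i - n))" for i
  have "(\<Sum>i<n. ga_mult G (f'' i) (g'' i) t) = u t" for t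
    unfolding u(1) by (rule sum.cong) (simp_all add: f''_def g''_def)
  moreover have "(\<Sum>i<n'. ga_mult G (f'' (i + n)) (g'' (i + n)) t) = v t" for t
    unfolding v(1) by (simp add: f''_def g''_def)
  ultimately have sum: "(\<lambda>t. u t + v t) = (\<lambda>t. \<Sum>i<n + n'. ga_mult G (f'' i) (g'' i) t)"
    by (simp add: sum_lessThan_add)
  show "(\<lambda>t. u t + v t) \<in> set_mult G M N"
    unfolding sum by (rule set_multI) (use u(2) v(2) in \<open>auto simp: f''_def g''_def\<close>)
next
  fix c u assume "u \<in> set_mult G M N"
  then obtain n :: nat and f g
    where u: "u = (\<lambda>t. \<Sum>i<n. ga_mult G (f i) (g i) t)" "\<forall>i<n. f i \<in> M \<and> g i \<in> N"
    unfolding set_mult_iff by blast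
  have scaled: "(\<lambda>t. c * u t) = (\<lambda>t. \<Sum>i<n. ga_mult G (f i) (\<lambda>s. c * g i s) t)"
    by (simp add: u(1) ga_mult_scale_right sum_distrib_left)
  show "(\<lambda>t. c * u t) \<in> set_mult G M N"
    unfolding scaled by (rule set_multI) (simp add: u(2) fun_subspace_scale[OF assms])
qed

lemma ga_mult_in_set_mult: "x \<in> M \<Longrightarrow> y \<in> N \<Longrightarrow> ga_mult G x y \<in> set_mult G M N"
  using set_multI[of 1 "\<lambda>_. x" M "\<lambda>_. y" N G] by simp

lemma set_mult_mono: "M \<subseteq> M' \<Longrightarrow> set_mult G M N \<subseteq> set_mult G M' N"
  unfolding set_mult_def by blast

lemma fun_subspace_grp_alg: "fun_subspace (grp_alg G)"
  unfolding fun_subspace_def grp_alg_def by simp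

abbreviation augmentation_ideal :: "('a, 'b) monoid_scheme \<Rightarrow> ('a \<Rightarrow> 'k::field) set" where
  "augmentation_ideal G \<equiv> aug_ideal G (carrier G)"

lemma fun_subspace_aug_ideal: "fun_subspace (aug_ideal G H)"
  unfolding fun_subspace_def aug_ideal_def grp_alg_def
  by (simp add: sum.distrib flip: sum_distrib_left)

definition line_plus :: "('a \<Rightarrow> 'k::field) \<Rightarrow> ('a \<Rightarrow> 'k) set \<Rightarrow> ('a \<Rightarrow> 'k) set" where
  "line_plus e B = {v. \<exists>r. (\<lambda>t. v t - r * e t) \<in> B}"

lemma fun_subspace_line_plus:
  assumes B: "fun_subspace B" shows "fun_subspace (line_plus e B)"
  unfolding fun_subspace_def line_plus_def
proof (intro conjI ballI allI; clarsimp)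
  show "\<exists>r. (\<lambda>t. - (r * e t)) \<in> B" using fun_subspace_zero[OF B] by (intro exI[of _ 0]) simp
next
  fix u v r s assume "(\<lambda>t. u t - r * e t) \<in> B" "(\<lambda>t. v t - s * e t) \<in> B"
  from fun_subspace_add[OF B this] show "\<exists>r. (\<lambda>t. u t + v t - r * e t) \<in> B"
    by (intro exI[of _ "r + s"]) (simp add: algebra_simps)
next
  fix c u r assume "(\<lambda>t. u t - r * e t) \<in> B"
  from fun_subspace_scale[OF B this, of c] show "\<exists>r. (\<lambda>t. c * u t - r * e t) \<in> B"
    by (intro exI[of _ "c * r"]) (simp add: algebra_simps)
qed

lemma subset_line_plus: "fun_subspace B \<Longrightarrow> B \<subseteq> line_plus e B"
  unfolding line_plus_def by (auto intro: exI[of _ 0])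

lemma line_plus_self: "fun_subspace B \<Longrightarrow> e \<in> line_plus e B"
  unfolding line_plus_def using fun_subspace_zero by (intro CollectI exI[of _ 1]) simp

lemma set_mult_subset:
  assumes "fun_subspace V" "\<And>x y. x \<in> M \<Longrightarrow> y \<in> N \<Longrightarrow> ga_mult G x y \<in> V"
  shows "set_mult G M N \<subseteq> V"
proof
  fix u assume "u \<in> set_mult G M N"
  then obtain n :: nat and f g where "u = (\<lambda>t. \<Sum>i<n. ga_mult G (f i) (g i) t)" "\<forall>i<n. f i \<in> M \<and> g i \<in> N"
    unfolding set_mult_iff by blast
  then show "u \<in> V" using assms by (auto intro: fun_subspace_sum)
qed

definition ga_elem :: "'a \<Rightarrow> 'a \<Rightarrow> 'k::field" where
  "ga_elem x = (\<lambda>t. if t = x then 1 else 0)"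

definition ga_diff :: "'a \<Rightarrow> 'a \<Rightarrow> 'a \<Rightarrow> 'k::field" where
  "ga_diff x y = (\<lambda>t. ga_elem x t - ga_elem y t)"

lemma sum_ga_elem_mult:
  assumes "finite S" "x \<in> S" shows "(\<Sum>s\<in>S. ga_elem x s * f s) = f x"
proof -
  have "(\<Sum>s\<in>S. ga_elem x s * f s) = (\<Sum>s\<in>S. if s = x then f s else 0)"
    by (rule sum.cong) (auto simp: ga_elem_def)
  then show ?thesis using assms by (simp add: sum.delta')
qed

lemma sum_ga_elem: "finite S \<Longrightarrow> x \<in> S \<Longrightarrow> (\<Sum>s\<in>S. ga_elem x s) = 1"
  using sum_ga_elem_mult[of S x "\<lambda>_. 1"] by simp

lemma ga_elem_in_grp_alg: "x \<in> carrier G \<Longrightarrow> ga_elem x \<in> grp_alg G"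
  by (auto simp: grp_alg_def ga_elem_def)

lemma ga_diff_in_aug_ideal:
  assumes "finite H" "x \<in> H" "y \<in> H" "H \<subseteq> carrier G"
  shows "ga_diff x y \<in> aug_ideal G H"
proof -
  have "(\<Sum>t\<in>H. ga_diff x y t) = 0"
    using assms by (simp add: ga_diff_def sum_subtractf sum_ga_elem)
  then show ?thesis using assms unfolding aug_ideal_def grp_alg_def ga_diff_def ga_elem_def by auto
qed

lemma sum_aug_ideal_carrier:
  "u \<in> aug_ideal G H \<Longrightarrow> H \<subseteq> carrier G \<Longrightarrow> finite (carrier G) \<Longrightarrow> (\<Sum>x\<in>carrier G. u x) = 0"
  by (subst sum.mono_neutral_right[of "carrier G" H]) (auto simp: aug_ideal_def)

lemma aug_ideal_eq_sum_ga_diff: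
  assumes "finite H" "u \<in> aug_ideal G H"
  shows "u = (\<lambda>t. \<Sum>c\<in>H. u c * ga_diff c \<one>\<^bsub>G\<^esub> t)"
proof
  fix t
  have u: "\<And>x. x \<notin> H \<Longrightarrow> u x = 0" "(\<Sum>x\<in>H. u x) = 0" using assms(2) by (auto simp: aug_ideal_def)
  have "(\<Sum>c\<in>H. u c * ga_diff c \<one>\<^bsub>G\<^esub> t) = (\<Sum>c\<in>H. ga_elem t c * u c) - (\<Sum>c\<in>H. u c) * ga_elem \<one>\<^bsub>G\<^esub> t"
    by (simp add: ga_diff_def ga_elem_def algebra_simps sum_subtractf sum_distrib_right eq_commute)
  also have "\<dots> = u t"
    using sum_ga_elem_mult[OF assms(1), of t u] u by (cases "t \<in> H") (auto simp: ga_elem_def intro!: sum.neutral)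
  finally show "u t = (\<Sum>c\<in>H. u c * ga_diff c \<one>\<^bsub>G\<^esub> t)" by simp
qed

context group
begin

lemma ga_mult_ga_elem:
  assumes "finite (carrier G)" "x \<in> carrier G" "y \<in> carrier G"
  shows "ga_mult G (ga_elem x) (ga_elem y) = ga_elem (x \<otimes> y)"
proof
  fix t
  show "ga_mult G (ga_elem x) (ga_elem y) t = ga_elem (x \<otimes> y) t"
  proof (cases "t \<in> carrier G")
    case True
    have "inv x \<otimes> t = y \<longleftrightarrow> t = x \<otimes> y"
      using assms True by (simp add: inv_solve_left')
    then show ?thesis
      using True sum_ga_elem_mult[OF assms(1,2), of "\<lambda>s. ga_elem y (inv s \<otimes> t)"]
      by (simp add: ga_mult_def ga_elem_def)
  next
    case False
    then show ?thesis using assms by (auto simp: ga_mult_def ga_elem_def)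
  qed
qed

lemma ga_mult_one_right:
  assumes "finite (carrier G)" "f \<in> grp_alg G"
  shows "ga_mult G f (ga_elem \<one>) = f"
proof
  fix t
  show "ga_mult G f (ga_elem \<one>) t = f t"
  proof (cases "t \<in> carrier G")
    case True
    have "inv s \<otimes> t = \<one> \<longleftrightarrow> t = s" if "s \<in> carrier G" for s
      using that True by (simp add: inv_solve_left')
    then have "ga_mult G f (ga_elem \<one>) t = (\<Sum>s\<in>carrier G. ga_elem t s * f s)"
      using True by (auto simp: ga_mult_def ga_elem_def intro!: sum.cong)
    then show ?thesis using sum_ga_elem_mult[OF assms(1) True] by simp
  next
    case False
    then show ?thesis using assms(2) by (simp add: ga_mult_def grp_alg_def)
  qed
qed

lemma ga_mult_ga_diff:
  assumes "finite (carrier G)" "x \<in> carrier G" "y \<in> carrier G" "z \<in> carrier G" "w \<in> carrier G"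
  shows "ga_mult G (ga_diff x y) (ga_diff z w) =
    (\<lambda>t. ga_elem (x \<otimes> z) t - ga_elem (x \<otimes> w) t - ga_elem (y \<otimes> z) t + ga_elem (y \<otimes> w) t)"
  unfolding ga_diff_def ga_mult_diff_left ga_mult_diff_right
  using assms by (simp add: ga_mult_ga_elem algebra_simps)

lemma ga_diff_one_in_aug_ideal:
  assumes "subgroup H G" "finite (carrier G)" "c \<in> H"
  shows "ga_diff c \<one> \<in> aug_ideal G H"
  using finite_subset[OF subgroup.subset[OF assms(1)] assms(2)] assms(3)
    subgroup.one_closed[OF assms(1)] subgroup.subset[OF assms(1)]
  by (rule ga_diff_in_aug_ideal)

lemma aug_ideal_subset_set_mult_grp_alg:
  assumes "finite (carrier G)"
  shows "aug_ideal G H \<subseteq> set_mult G (aug_ideal G H) (grp_alg G)"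
proof
  fix u assume u: "u \<in> aug_ideal G H"
  then have "ga_mult G u (ga_elem \<one>) \<in> set_mult G (aug_ideal G H) (grp_alg G)"
    by (intro ga_mult_in_set_mult ga_elem_in_grp_alg one_closed)
  moreover have "u \<in> grp_alg G" using u by (simp add: aug_ideal_def)
  ultimately show "u \<in> set_mult G (aug_ideal G H) (grp_alg G)" by (simp add: ga_mult_one_right[OF assms])
qed

end

definition linear_ext :: "('a, 'b) monoid_scheme \<Rightarrow> ('a \<Rightarrow> 'k::field) \<Rightarrow> ('a \<Rightarrow> 'k) \<Rightarrow> 'k" where
  "linear_ext G \<Phi> u = (\<Sum>x\<in>carrier G. u x * \<Phi> x)"

lemma linear_ext_sum: "linear_ext G \<Phi> (\<lambda>t. \<Sum>i<n. h i t) = (\<Sum>i<n. linear_ext G \<Phi> (h i))"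
  unfolding linear_ext_def by (simp add: sum_distrib_right sum.swap[of _ "carrier G"])

lemma linear_ext_diff: "linear_ext G \<Phi> (\<lambda>t. u t - v t) = linear_ext G \<Phi> u - linear_ext G \<Phi> v"
  unfolding linear_ext_def by (simp add: algebra_simps sum_subtractf)

lemma linear_ext_scale: "linear_ext G \<Phi> (\<lambda>t. c * u t) = c * linear_ext G \<Phi> u"
  unfolding linear_ext_def by (simp add: algebra_simps sum_distrib_left)

lemma linear_ext_ga_diff:
  "finite (carrier G) \<Longrightarrow> x \<in> carrier G \<Longrightarrow> y \<in> carrier G \<Longrightarrow> linear_ext G \<Phi> (ga_diff x y) = \<Phi> x - \<Phi> y"
  unfolding linear_ext_def ga_diff_def
  by (simp add: left_diff_distrib sum_subtractf sum_ga_elem_mult)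

lemma linear_ext_set_mult_eq_0:
  assumes "\<And>x y. x \<in> M \<Longrightarrow> y \<in> N \<Longrightarrow> linear_ext G \<Phi> (ga_mult G x y) = 0" "u \<in> set_mult G M N"
  shows "linear_ext G \<Phi> u = 0"
proof -
  obtain n :: nat and f g where "u = (\<lambda>t. \<Sum>i<n. ga_mult G (f i) (g i) t)" "\<forall>i<n. f i \<in> M \<and> g i \<in> N"
    using assms(2) unfolding set_mult_iff by blast
  then show ?thesis using assms(1) by (simp add: linear_ext_sum)
qed

lemma (in group) linear_ext_ga_mult:
  "linear_ext G \<Phi> (ga_mult G u v) = (\<Sum>y\<in>carrier G. \<Sum>z\<in>carrier G. u y * v z * \<Phi> (y \<otimes> z))"
proof -
  have "linear_ext G \<Phi> (ga_mult G u v) = (\<Sum>x\<in>carrier G. \<Sum>y\<in>carrier G. u y * v (inv y \<otimes> x) * \<Phi> x)"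
    unfolding linear_ext_def ga_mult_def by (simp add: sum_distrib_right)
  also have "\<dots> = (\<Sum>y\<in>carrier G. \<Sum>x\<in>carrier G. u y * v (inv y \<otimes> x) * \<Phi> x)"
    by (rule sum.swap)
  also have "\<dots> = (\<Sum>y\<in>carrier G. \<Sum>z\<in>carrier G. u y * v z * \<Phi> (y \<otimes> z))"
  proof (rule sum.cong[OF refl])
    fix y assume y: "y \<in> carrier G"
    have "bij_betw (\<lambda>z. y \<otimes> z) (carrier G) (carrier G)"
      using y by (intro bij_betwI[where g="\<lambda>x. inv y \<otimes> x"]) (auto simp: m_assoc[symmetric])
    from sum.reindex_bij_betw[OF this, of "\<lambda>x. u y * v (inv y \<otimes> x) * \<Phi> x"] y
    show "(\<Sum>x\<in>carrier G. u y * v (inv y \<otimes> x) * \<Phi> x) = (\<Sum>z\<in>carrier G. u y * v z * \<Phi> (y \<otimes> z))"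
      by (simp add: m_assoc[symmetric])
  qed
  finally show ?thesis .
qed

section \<open>Quadratic maps\<close>

lemma triple_sum_eq_0:
  fixes x y w :: "'a \<Rightarrow> 'k::field"
  assumes "finite C" "(\<Sum>g\<in>C. x g) = 0" "(\<Sum>g\<in>C. y g) = 0" "(\<Sum>g\<in>C. w g) = 0"
    and T: "\<And>g h l. g \<in> C \<Longrightarrow> h \<in> C \<Longrightarrow> l \<in> C \<Longrightarrow> T g h l = P g h + Q g l + R h l"
  shows "(\<Sum>l\<in>C. w l * (\<Sum>g\<in>C. \<Sum>h\<in>C. x g * y h * T g h l)) = 0"
proof -
  define K where "K = (\<Sum>g\<in>C. \<Sum>h\<in>C. x g * y h * P g h)"
  have Q_part: "(\<Sum>g\<in>C. \<Sum>h\<in>C. x g * y h * Q g l) = (\<Sum>g\<in>C. x g * Q g l * (\<Sum>h\<in>C. y h))" for l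
    unfolding sum_distrib_left by (intro sum.cong refl) (simp add: mult_ac)
  have R_part: "(\<Sum>g\<in>C. \<Sum>h\<in>C. x g * y h * R h l) = (\<Sum>g\<in>C. x g) * (\<Sum>h\<in>C. y h * R h l)" for l
    unfolding sum_distrib_right by (intro sum.cong refl) (simp add: sum_distrib_left mult.assoc)
  have inner: "(\<Sum>g\<in>C. \<Sum>h\<in>C. x g * y h * T g h l) = K" if "l \<in> C" for l
  proof -
    have "(\<Sum>g\<in>C. \<Sum>h\<in>C. x g * y h * T g h l)
        = (\<Sum>g\<in>C. \<Sum>h\<in>C. x g * y h * P g h + x g * y h * Q g l + x g * y h * R h l)"
      using that by (intro sum.cong refl) (simp add: T algebra_simps)
    also have "\<dots> = K + (\<Sum>g\<in>C. \<Sum>h\<in>C. x g * y h * Q g l) + (\<Sum>g\<in>C. \<Sum>h\<in>C. x g * y h * R h l)"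
      unfolding K_def by (simp add: sum.distrib)
    finally show ?thesis using Q_part R_part assms(2,3) by simp
  qed
  have "(\<Sum>l\<in>C. w l * (\<Sum>g\<in>C. \<Sum>h\<in>C. x g * y h * T g h l)) = (\<Sum>l\<in>C. w l) * K"
    by (simp add: inner sum_distrib_right cong: sum.cong)
  then show ?thesis using assms(4) by simp
qed

text \<open>The model is the upper-right entry of a homomorphism into a Heisenberg group. The second
  difference of \<open>F\<close> is bilinear, which is why its linear extension kills \<open>I(G)\<^sup>3\<close>; and \<open>\<xi>\<close>
  vanishes on \<open>G'\<close>, which is why it kills \<open>I(G') I(G)\<close>.\<close>
locale quadratic_map = group G for G (structure) +
  fixes F \<xi> \<eta> :: "'a \<Rightarrow> 'k::field"
  assumes finite_carrier: "finite (carrier G)"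
    and F_mult: "g \<in> carrier G \<Longrightarrow> h \<in> carrier G \<Longrightarrow> F (g \<otimes> h) = F g + F h + \<xi> g * \<eta> h"
    and xi_mult: "g \<in> carrier G \<Longrightarrow> h \<in> carrier G \<Longrightarrow> \<xi> (g \<otimes> h) = \<xi> g + \<xi> h"
begin

lemma xi_derived: "c \<in> derived G (carrier G) \<Longrightarrow> \<xi> c = 0"
proof -
  have one: "\<xi> \<one> = 0" using xi_mult[of \<one> \<one>] by (metis add_cancel_right_right l_one one_closed)
  have inv: "\<xi> (inv g) = - \<xi> g" if "g \<in> carrier G" for g
    using xi_mult[of "inv g" g] that one by (simp add: eq_neg_iff_add_eq_0)
  have "subgroup {c \<in> carrier G. \<xi> c = 0} G"
    by (rule subgroupI) (auto simp: one inv xi_mult)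
  moreover have "derived_set G (carrier G) \<subseteq> {c \<in> carrier G. \<xi> c = 0}"
    by (auto simp: xi_mult inv)
  ultimately have "derived G (carrier G) \<subseteq> {c \<in> carrier G. \<xi> c = 0}"
    unfolding derived_def by (rule generate_subgroup_incl[rotated])
  then show "c \<in> derived G (carrier G) \<Longrightarrow> \<xi> c = 0" by blast
qed

lemma linear_ext_aug_derived_mult:
  assumes u: "u \<in> aug_ideal G (derived G (carrier G))" and v: "v \<in> augmentation_ideal G"
  shows "linear_ext G F (ga_mult G u v) = 0"
proof -
  have derived_sub: "derived G (carrier G) \<subseteq> carrier G" by (rule derived_in_carrier) simp
  have "linear_ext G F (ga_mult G u v) = (\<Sum>y\<in>carrier G. \<Sum>z\<in>carrier G. u y * v z * (F y + F z))"
    unfolding linear_ext_ga_mult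
  proof (intro sum.cong refl)
    fix y z assume yz: "y \<in> carrier G" "z \<in> carrier G"
    show "u y * v z * F (y \<otimes> z) = u y * v z * (F y + F z)"
      using u yz xi_derived by (cases "y \<in> derived G (carrier G)") (auto simp: F_mult aug_ideal_def)
  qed
  also have "\<dots> = (\<Sum>y\<in>carrier G. u y * (\<Sum>z\<in>carrier G. v z * F z)
      + u y * F y * (\<Sum>z\<in>carrier G. v z))"
    by (intro sum.cong refl) (simp add: algebra_simps sum.distrib sum_distrib_left)
  also have "\<dots> = (\<Sum>y\<in>carrier G. u y) * (\<Sum>z\<in>carrier G. v z * F z)
      + (\<Sum>y\<in>carrier G. u y * F y) * (\<Sum>z\<in>carrier G. v z)"
    by (simp add: sum.distrib sum_distrib_right)
  also have "\<dots> = 0"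
    using sum_aug_ideal_carrier[OF u derived_sub finite_carrier]
      sum_aug_ideal_carrier[OF v _ finite_carrier] by simp
  finally show ?thesis .
qed

lemma linear_ext_aug_sq_mult:
  assumes f: "f \<in> set_mult G (augmentation_ideal G) (augmentation_ideal G)"
    and w: "w \<in> augmentation_ideal G"
  shows "linear_ext G F (ga_mult G f w) = 0"
proof -
  obtain n :: nat and x y where f_eq: "f = (\<lambda>t. \<Sum>i<n. ga_mult G (x i) (y i) t)"
    and xy: "\<forall>i<n. x i \<in> augmentation_ideal G \<and> y i \<in> augmentation_ideal G"
    using f unfolding set_mult_iff by blast
  have sum_0: "(\<Sum>g\<in>carrier G. u g) = 0" if "u \<in> augmentation_ideal G" for u :: "'a \<Rightarrow> 'k"
    using sum_aug_ideal_carrier[OF that _ finite_carrier] by simp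
  have "linear_ext G F (ga_mult G f w) = (\<Sum>y\<in>carrier G. \<Sum>z\<in>carrier G. f y * w z * F (y \<otimes> z))"
    by (rule linear_ext_ga_mult)
  also have "\<dots> = (\<Sum>z\<in>carrier G. \<Sum>y\<in>carrier G. f y * w z * F (y \<otimes> z))"
    by (rule sum.swap)
  also have "\<dots> = (\<Sum>z\<in>carrier G. w z * linear_ext G (\<lambda>y. F (y \<otimes> z)) f)"
    by (simp add: linear_ext_def sum_distrib_left mult_ac)
  also have "\<dots> = (\<Sum>i<n. \<Sum>z\<in>carrier G. w z *
      (\<Sum>g\<in>carrier G. \<Sum>h\<in>carrier G. x i g * y i h * F (g \<otimes> h \<otimes> z)))"
    unfolding f_eq linear_ext_sum linear_ext_ga_mult
    by (simp add: sum_distrib_left sum.swap[of _ "{..<n}"])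
  also have "\<dots> = 0"
  proof (rule sum.neutral, intro ballI)
    fix i assume "i \<in> {..<n}"
    then have i: "x i \<in> augmentation_ideal G" "y i \<in> augmentation_ideal G" using xy by auto
    show "(\<Sum>z\<in>carrier G. w z * (\<Sum>g\<in>carrier G. \<Sum>h\<in>carrier G. x i g * y i h * F (g \<otimes> h \<otimes> z))) = 0"
      using finite_carrier sum_0[OF i(1)] sum_0[OF i(2)] sum_0[OF w]
    proof (rule triple_sum_eq_0[where P = "\<lambda>g h. F g + F h + \<xi> g * \<eta> h"
          and Q = "\<lambda>g l. F l + \<xi> g * \<eta> l" and R = "\<lambda>h l. \<xi> h * \<eta> l"])
      fix g h l assume "g \<in> carrier G" "h \<in> carrier G" "l \<in> carrier G"
      then show "F (g \<otimes> h \<otimes> l) = (F g + F h + \<xi> g * \<eta> h) + (F l + \<xi> g * \<eta> l) + \<xi> h * \<eta> l"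
        by (simp add: F_mult xi_mult algebra_simps)
    qed
  qed
  finally show ?thesis .
qed

lemma linear_ext_aug_derived:
  "u \<in> set_mult G (aug_ideal G (derived G (carrier G))) (augmentation_ideal G) \<Longrightarrow> linear_ext G F u = 0"
  using linear_ext_set_mult_eq_0 linear_ext_aug_derived_mult by blast

lemma linear_ext_aug_cube:
  "u \<in> set_mult G (set_mult G (augmentation_ideal G) (augmentation_ideal G)) (augmentation_ideal G) \<Longrightarrow>
    linear_ext G F u = 0"
  using linear_ext_set_mult_eq_0 linear_ext_aug_sq_mult by blast

end

section \<open>The augmentation ideal of the derived subgroup\<close>

context group
begin

lemma ga_diff_mult_one:
  assumes "finite (carrier G)" "c \<in> carrier G" "d \<in> carrier G"
  shows "ga_diff (c \<otimes> d) \<one> =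
    (\<lambda>t. ga_diff c \<one> t + ga_diff d \<one> t + ga_mult G (ga_diff c \<one>) (ga_diff d \<one>) t)"
  unfolding ga_mult_ga_diff[OF assms(1,2) one_closed assms(3) one_closed]
  using assms by (simp add: ga_diff_def)

lemma ga_diff_inv_one:
  assumes "finite (carrier G)" "c \<in> carrier G"
  shows "ga_diff (inv c) \<one> =
    (\<lambda>t. - ga_diff c \<one> t - ga_mult G (ga_diff c \<one>) (ga_diff (inv c) \<one>) t)"
  unfolding ga_mult_ga_diff[OF assms(1,2) one_closed inv_closed[OF assms(2)] one_closed]
  using assms by (simp add: ga_diff_def)

lemma ga_diff_commutator_one:
  assumes "finite (carrier G)" "g \<in> carrier G" "h \<in> carrier G"
  shows "ga_diff (g \<otimes> h \<otimes> inv g \<otimes> inv h) \<one> =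
    (\<lambda>t. ga_mult G (ga_diff g \<one>) (ga_diff (h \<otimes> inv g \<otimes> inv h) (inv g \<otimes> inv h)) t
       + ga_mult G (ga_diff \<one> h) (ga_diff (inv h) (inv g \<otimes> inv h)) t)"
proof -
  have "g \<otimes> (inv g \<otimes> inv h) = inv h" using assms by (simp add: m_assoc[symmetric])
  with assms show ?thesis by (subst (1 2) ga_mult_ga_diff) (simp_all add: ga_diff_def m_assoc)
qed

lemma ga_diff_derived_in_aug_sq:
  assumes fin: "finite (carrier G)" and c: "c \<in> derived G (carrier G)"
  shows "(ga_diff c \<one> :: 'a \<Rightarrow> 'k::field) \<in> set_mult G (augmentation_ideal G) (augmentation_ideal G)"
proof -
  let ?I2 = "set_mult G (augmentation_ideal G) (augmentation_ideal G) :: ('a \<Rightarrow> 'k) set"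
  have I2: "fun_subspace ?I2" by (rule fun_subspace_set_mult[OF fun_subspace_aug_ideal])
  have prod: "ga_mult G (ga_diff x y) (ga_diff z w) \<in> ?I2"
    if "x \<in> carrier G" "y \<in> carrier G" "z \<in> carrier G" "w \<in> carrier G" for x y z w
    using that fin by (intro ga_mult_in_set_mult ga_diff_in_aug_ideal) auto
  have comm: "ga_diff (x \<otimes> y \<otimes> inv x \<otimes> inv y) \<one> \<in> ?I2" if "x \<in> carrier G" "y \<in> carrier G" for x y
    unfolding ga_diff_commutator_one[OF fin that]
    using that by (simp add: fun_subspace_add[OF I2] prod)
  have "c \<in> generate G (derived_set G (carrier G))" using c by (simp add: derived_def)
  then have "c \<in> carrier G \<and> ga_diff c \<one> \<in> ?I2"
  proof (induction rule: generate.induct)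
    case one
    then show ?case using fun_subspace_zero[OF I2] by (simp add: ga_diff_def)
  next
    case (incl h)
    then show ?case using comm by auto
  next
    case (inv h)
    then have h: "h \<in> carrier G" "ga_diff h \<one> \<in> ?I2" using comm by auto
    have "(\<lambda>t. - ga_diff h \<one> t - ga_mult G (ga_diff h \<one>) (ga_diff (inv h) \<one>) t) \<in> ?I2"
      using fun_subspace_diff[OF I2 fun_subspace_scale[OF I2 h(2), of "-1"] prod[of h \<one> "inv h" \<one>]] h(1)
      by simp
    then have "ga_diff (inv h) \<one> \<in> ?I2" by (subst ga_diff_inv_one[OF fin h(1)])
    with h(1) show ?case by simp
  next
    case (eng h1 h2)
    then have h: "h1 \<in> carrier G" "h2 \<in> carrier G" "ga_diff h1 \<one> \<in> ?I2" "ga_diff h2 \<one> \<in> ?I2"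
      by auto
    have "(\<lambda>t. ga_diff h1 \<one> t + ga_diff h2 \<one> t + ga_mult G (ga_diff h1 \<one>) (ga_diff h2 \<one>) t) \<in> ?I2"
      using fun_subspace_add[OF I2 fun_subspace_add[OF I2 h(3,4)] prod[OF h(1) one_closed h(2) one_closed]] .
    then show ?case unfolding ga_diff_mult_one[OF fin h(1,2)] using h(1,2) by simp
  qed
  then show ?thesis by simp
qed

lemma aug_ideal_derived_subset_aug_sq:
  assumes "finite (carrier G)"
  shows "(aug_ideal G (derived G (carrier G)) :: ('a \<Rightarrow> 'k::field) set)
    \<subseteq> set_mult G (augmentation_ideal G) (augmentation_ideal G)"
proof
  fix u assume u: "u \<in> aug_ideal G (derived G (carrier G))"
  have "derived G (carrier G) \<subseteq> carrier G" by (rule derived_in_carrier) simp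
  then have fin: "finite (derived G (carrier G))" using assms by (rule finite_subset)
  have "(\<lambda>t. \<Sum>c\<in>derived G (carrier G). u c * ga_diff c \<one> t)
      \<in> set_mult G (augmentation_ideal G) (augmentation_ideal G)"
    using fin by (rule fun_subspace_sum[OF fun_subspace_set_mult[OF fun_subspace_aug_ideal]])
      (rule fun_subspace_scale[OF fun_subspace_set_mult[OF fun_subspace_aug_ideal]
        ga_diff_derived_in_aug_sq[OF assms]])
  then show "u \<in> set_mult G (augmentation_ideal G) (augmentation_ideal G)"
    using aug_ideal_eq_sum_ga_diff[OF fin u] by simp
qed

end

context group
begin

lemma ga_diff_generate_single:
  assumes fin: "finite (carrier G)" and g: "g \<in> carrier G" and c: "c \<in> generate G {g}"
  shows "ga_diff c \<one> \<in> line_plus (ga_diff g \<one>)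
    (set_mult G (aug_ideal G (generate G {g})) (augmentation_ideal G) :: ('a \<Rightarrow> 'k::field) set)"
proof -
  let ?H = "generate G {g}"
  let ?B = "set_mult G (aug_ideal G ?H) (augmentation_ideal G) :: ('a \<Rightarrow> 'k) set"
  let ?L = "line_plus (ga_diff g \<one>) ?B"
  have H: "subgroup ?H G" using g by (intro generate_is_subgroup) auto
  have B: "fun_subspace ?B" by (rule fun_subspace_set_mult[OF fun_subspace_aug_ideal])
  have L: "fun_subspace ?L" by (rule fun_subspace_line_plus[OF B])
  have prod: "ga_mult G (ga_diff x \<one>) (ga_diff y \<one>) \<in> ?L" if "x \<in> ?H" "y \<in> carrier G" for x y
    using ga_mult_in_set_mult[OF ga_diff_one_in_aug_ideal[OF H fin that(1)]
        ga_diff_one_in_aug_ideal[OF subgroup_self fin that(2)]] subset_line_plus[OF B] by blast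
  from c show ?thesis
  proof (induction rule: generate.induct)
    case one
    then show ?case using fun_subspace_zero[OF L] by (simp add: ga_diff_def)
  next
    case (incl h)
    then show ?case using line_plus_self[OF B] by simp
  next
    case (inv h)
    then have "h = g" by simp
    have "(\<lambda>t. - ga_diff g \<one> t - ga_mult G (ga_diff g \<one>) (ga_diff (inv g) \<one>) t) \<in> ?L"
      using fun_subspace_diff[OF L fun_subspace_scale[OF L line_plus_self[OF B], of "-1"]
          prod[OF generate.incl[of g "{g}" G] inv_closed[OF g]]]
      by simp
    then show ?case unfolding \<open>h = g\<close> by (subst ga_diff_inv_one[OF fin g]) simp
  next
    case (eng h1 h2)
    have h: "h1 \<in> carrier G" "h2 \<in> carrier G" using eng(1,2) subgroup.subset[OF H] by auto
    have "(\<lambda>t. ga_diff h1 \<one> t + ga_diff h2 \<one> t + ga_mult G (ga_diff h1 \<one>) (ga_diff h2 \<one>) t) \<in> ?L"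
      using fun_subspace_add[OF L fun_subspace_add[OF L eng(3,4)] prod[OF eng(1) h(2)]] .
    then show ?case unfolding ga_diff_mult_one[OF fin h] .
  qed
qed

lemma aug_ideal_generate_single_subset:
  assumes fin: "finite (carrier G)" and g: "g \<in> carrier G"
  shows "aug_ideal G (generate G {g}) \<subseteq> line_plus (ga_diff g \<one>)
    (set_mult G (aug_ideal G (generate G {g})) (augmentation_ideal G) :: ('a \<Rightarrow> 'k::field) set)"
proof
  fix u :: "'a \<Rightarrow> 'k" assume u: "u \<in> aug_ideal G (generate G {g})"
  have "generate G {g} \<subseteq> carrier G" using g by (intro generate_incl) auto
  then have finH: "finite (generate G {g})" using fin by (rule finite_subset)
  have "(\<lambda>t. \<Sum>c\<in>generate G {g}. u c * ga_diff c \<one> t) \<in> line_plus (ga_diff g \<one>)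
      (set_mult G (aug_ideal G (generate G {g})) (augmentation_ideal G))"
    using fun_subspace_line_plus[OF fun_subspace_set_mult[OF fun_subspace_aug_ideal]]
    by (intro fun_subspace_sum finH fun_subspace_scale ga_diff_generate_single fin g) auto
  then show "u \<in> line_plus (ga_diff g \<one>) (set_mult G (aug_ideal G (generate G {g})) (augmentation_ideal G))"
    using aug_ideal_eq_sum_ga_diff[OF finH u] by simp
qed

text \<open>Every \<open>h \<in> kG\<close> is \<open>\<epsilon>(h) \<cdot> 1\<close> plus an element of \<open>I(G)\<close>, so
  \<open>I(H) kG = I(H) + I(H) I(G)\<close>.\<close>
lemma set_mult_aug_generate_single_subset:
  assumes fin: "finite (carrier G)" and g: "g \<in> carrier G"
  shows "set_mult G (aug_ideal G (generate G {g})) (grp_alg G) \<subseteq> line_plus (ga_diff g \<one>)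
    (set_mult G (aug_ideal G (generate G {g})) (augmentation_ideal G) :: ('a \<Rightarrow> 'k::field) set)"
proof -
  let ?B = "set_mult G (aug_ideal G (generate G {g})) (augmentation_ideal G) :: ('a \<Rightarrow> 'k) set"
  let ?L = "line_plus (ga_diff g \<one>) ?B"
  have B: "fun_subspace ?B" by (rule fun_subspace_set_mult[OF fun_subspace_aug_ideal])
  have L: "fun_subspace ?L" by (rule fun_subspace_line_plus[OF B])
  show ?thesis
  proof (rule set_mult_subset[OF L])
    fix f h :: "'a \<Rightarrow> 'k" assume f: "f \<in> aug_ideal G (generate G {g})" and h: "h \<in> grp_alg G"
    define \<epsilon> where "\<epsilon> = (\<Sum>x\<in>carrier G. h x)"
    define h' where "h' = (\<lambda>t. h t - \<epsilon> * ga_elem \<one> t)"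
    have "h' \<in> augmentation_ideal G"
      using h fin by (auto simp: aug_ideal_def grp_alg_def h'_def \<epsilon>_def ga_elem_def sum_subtractf
          sum_ga_elem[OF fin one_closed, unfolded ga_elem_def] simp flip: sum_distrib_left)
    then have "ga_mult G f h' \<in> ?L"
      using subset_line_plus[OF B] f by (blast intro: ga_mult_in_set_mult)
    moreover have "f \<in> ?L" using aug_ideal_generate_single_subset[OF fin g] f by blast
    moreover have "ga_mult G f h = (\<lambda>t. ga_mult G f h' t + \<epsilon> * f t)"
      using ga_mult_one_right[OF fin, of f] f
      unfolding h'_def ga_mult_diff_right ga_mult_scale_right by (simp add: aug_ideal_def)
    ultimately show "ga_mult G f h \<in> ?L"
      using fun_subspace_add[OF L _ fun_subspace_scale[OF L]] by simp
  qed
qed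

end

lemma (in quadratic_map) linear_ext_generator_neq_0:
  assumes gen: "derived G (carrier G) = generate G {g}" and g: "g \<in> carrier G"
    and a: "a \<in> derived G (carrier G)" and Fa: "F a \<noteq> F \<one>"
  shows "linear_ext G F (ga_diff g \<one>) \<noteq> 0"
proof
  assume L0: "linear_ext G F (ga_diff g \<one>) = 0"
  have "(ga_diff a \<one> :: 'a \<Rightarrow> 'k) \<in> aug_ideal G (derived G (carrier G))"
    using derived_is_subgroup[OF subset_refl] finite_carrier a by (rule ga_diff_one_in_aug_ideal)
  then obtain r :: 'k where "(\<lambda>t. ga_diff a \<one> t - r * ga_diff g \<one> t)
      \<in> set_mult G (aug_ideal G (derived G (carrier G))) (augmentation_ideal G)"
    using aug_ideal_generate_single_subset[OF finite_carrier g] unfolding gen line_plus_def by blast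
  then have "linear_ext G F (\<lambda>t. ga_diff a \<one> t - r * ga_diff g \<one> t) = 0"
    by (rule linear_ext_aug_derived)
  then show False
    using L0 Fa a derived_in_carrier[OF subset_refl] finite_carrier
    by (auto simp: linear_ext_diff linear_ext_scale linear_ext_ga_diff)
qed

lemma quot_sp_eq_range_line:
  assumes V: "fun_subspace V" and e: "\<And>c. (\<lambda>t. c * e t) \<in> A" and A: "A \<subseteq> line_plus e V"
  shows "quot_sp A V = range (\<lambda>c. coset_of (\<lambda>t. c * e t) V)"
proof
  show "quot_sp A V \<subseteq> range (\<lambda>c. coset_of (\<lambda>t. c * e t) V)"
  proof
    fix Y assume "Y \<in> quot_sp A V"
    then obtain v where v: "v \<in> A" "Y = coset_of v V" by (auto simp: quot_sp_def)
    then obtain r where "(\<lambda>t. v t - r * e t) \<in> V" using A by (auto simp: line_plus_def)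
    then have "Y = coset_of (\<lambda>t. r * e t) V" using v(2) coset_of_eq_iff[OF V] by simp
    then show "Y \<in> range (\<lambda>c. coset_of (\<lambda>t. c * e t) V)" by blast
  qed
  show "range (\<lambda>c. coset_of (\<lambda>t. c * e t) V) \<subseteq> quot_sp A V"
    unfolding quot_sp_def using e by (blast intro: imageI)
qed

lemma inj_coset_line:
  assumes V: "fun_subspace V" and L: "\<And>u. u \<in> V \<Longrightarrow> linear_ext G \<Phi> u = 0" and e: "linear_ext G \<Phi> e \<noteq> 0"
  shows "inj (\<lambda>c. coset_of (\<lambda>t. c * e t) V)"
proof (rule injI)
  fix c c' assume "coset_of (\<lambda>t. c * e t) V = coset_of (\<lambda>t. c' * e t) V"
  then have "(\<lambda>t. c * e t - c' * e t) \<in> V" by (simp add: coset_of_eq_iff[OF V])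
  then have "linear_ext G \<Phi> (\<lambda>t. c * e t - c' * e t) = 0" by (rule L)
  then have "(c - c') * linear_ext G \<Phi> e = 0"
    by (simp add: linear_ext_diff linear_ext_scale left_diff_distrib)
  then show "c = c'" using e by simp
qed

lemma nat_proj_coset:
  assumes B: "fun_subspace B" and D: "fun_subspace D" and BD: "B \<subseteq> D" and x: "x \<in> A"
  shows "nat_proj A B D (coset_of x B) = coset_of x D"
proof -
  let ?z = "SOME z. z \<in> A \<and> coset_of x B = coset_of z B"
  have "?z \<in> A \<and> coset_of x B = coset_of ?z B"
    by (rule someI[where P = "\<lambda>z. z \<in> A \<and> coset_of x B = coset_of z B" and x = x]) (simp add: x)
  then have "(\<lambda>t. ?z t - x t) \<in> B" using coset_of_eq_iff[OF B, of ?z x] by simp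
  then have "coset_of ?z D = coset_of x D" using BD coset_of_eq_iff[OF D, of ?z x] by blast
  then show ?thesis unfolding nat_proj_def .
qed

lemma set_addI: "a \<in> A \<Longrightarrow> d \<in> D \<Longrightarrow> (\<lambda>t. a t + d t) \<in> set_add A D"
  by (auto simp: set_add_def ga_add_def)

lemma set_add_subset_line_plus:
  assumes D: "fun_subspace D" and BD: "B \<subseteq> D" and A: "A \<subseteq> line_plus e B"
  shows "set_add A D \<subseteq> line_plus e D"
proof
  fix w assume "w \<in> set_add A D"
  then obtain v d where vd: "v \<in> A" "d \<in> D" "w = (\<lambda>t. v t + d t)" unfolding set_add_iff by blast
  then obtain r where "(\<lambda>t. v t - r * e t) \<in> B" using A unfolding line_plus_def by blast
  with BD have "(\<lambda>t. v t - r * e t) \<in> D" by blast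
  from fun_subspace_add[OF D this vd(2)] show "w \<in> line_plus e D"
    unfolding line_plus_def vd(3) by (intro CollectI exI[of _ r]) (simp add: algebra_simps)
qed

theorem nat_proj_bij_line:
  fixes A B D :: "('a \<Rightarrow> 'k::{field,finite}) set"
  assumes A: "fun_subspace A" and B: "fun_subspace B" and D: "fun_subspace D" and BD: "B \<subseteq> D"
    and e: "e \<in> A" and A_line: "A \<subseteq> line_plus e B"
    and L: "\<And>u. u \<in> D \<Longrightarrow> linear_ext G \<Phi> u = 0" and Le: "linear_ext G \<Phi> e \<noteq> 0"
  shows "nat_proj_welldef A B D
    \<and> bij_betw (nat_proj A B D) (quot_sp A B) (quot_sp (set_add A D) D)
    \<and> card (quot_sp A B) = card (UNIV :: 'k set)
    \<and> card (quot_sp (set_add A D) D) = card (UNIV :: 'k set)"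
proof -
  let ?\<psi> = "\<lambda>c. coset_of (\<lambda>t. c * e t) B" and ?\<chi> = "\<lambda>c. coset_of (\<lambda>t. c * e t) D"
  have ce: "(\<lambda>t. c * e t) \<in> A" for c by (rule fun_subspace_scale[OF A e])
  have ce': "(\<lambda>t. c * e t) \<in> set_add A D" for c
    using set_addI[OF ce fun_subspace_zero[OF D]] by simp
  have QB: "quot_sp A B = range ?\<psi>" by (rule quot_sp_eq_range_line[OF B ce A_line])
  have QD: "quot_sp (set_add A D) D = range ?\<chi>"
    by (rule quot_sp_eq_range_line[OF D ce' set_add_subset_line_plus[OF D BD A_line]])
  have inj: "inj ?\<psi>" "inj ?\<chi>" using L BD Le by (auto intro!: inj_coset_line B D)
  have wd: "nat_proj_welldef A B D"
    unfolding nat_proj_welldef_def coset_of_eq_iff[OF B] coset_of_eq_iff[OF D] using BD by blast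
  have "nat_proj A B D ` range ?\<psi> = range ?\<chi>"
    using nat_proj_coset[OF B D BD ce] by (auto simp: image_iff)
  moreover have "inj_on (nat_proj A B D) (range ?\<psi>)"
  proof (rule inj_onI)
    fix Y Y' assume "Y \<in> range ?\<psi>" "Y' \<in> range ?\<psi>" "nat_proj A B D Y = nat_proj A B D Y'"
    then obtain c c' where cc: "Y = ?\<psi> c" "Y' = ?\<psi> c'" and eq: "?\<chi> c = ?\<chi> c'"
      using nat_proj_coset[OF B D BD ce] by auto
    have "c = c'" using inj(2) eq by (rule injD)
    with cc show "Y = Y'" by simp
  qed
  ultimately have "bij_betw (nat_proj A B D) (quot_sp A B) (quot_sp (set_add A D) D)"
    unfolding QB QD bij_betw_def by blast
  moreover have "card (quot_sp A B) = card (UNIV :: 'k set)"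
    unfolding QB by (rule card_image[OF inj(1)])
  moreover have "card (quot_sp (set_add A D) D) = card (UNIV :: 'k set)"
    unfolding QD by (rule card_image[OF inj(2)])
  ultimately show ?thesis using wd by blast
qed

section \<open>The Heisenberg group modulo \<open>q\<close>\<close>

text \<open>A triple \<open>(x, y, z)\<close> stands for the unitriangular matrix with first row \<open>1, x, z\<close> and
  second row \<open>0, 1, y\<close>. The group is carried by \<open>nat\<close> because the universal property in
  \<open>is_presented_by\<close> only quantifies over groups on \<open>nat\<close>.\<close>
fun heis_mult :: "int \<Rightarrow> int \<times> int \<times> int \<Rightarrow> int \<times> int \<times> int \<Rightarrow> int \<times> int \<times> int" where
  "heis_mult q (x, y, z) (x', y', z') = ((x + x') mod q, (y + y') mod q, (z + z' + x * y') mod q)"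

definition heis_residues :: "int \<Rightarrow> (int \<times> int \<times> int) set" where
  "heis_residues q = {0..<q} \<times> {0..<q} \<times> {0..<q}"

definition heis_encode :: "int \<times> int \<times> int \<Rightarrow> nat" where
  "heis_encode = (\<lambda>(x, y, z). prod_encode (nat x, prod_encode (nat y, nat z)))"

definition heis_decode :: "nat \<Rightarrow> int \<times> int \<times> int" where
  "heis_decode n = (case prod_decode n of (x, r) \<Rightarrow> case prod_decode r of (y, z) \<Rightarrow> (int x, int y, int z))"

definition heisenberg :: "int \<Rightarrow> nat monoid" where
  "heisenberg q =
     \<lparr>carrier = heis_encode ` heis_residues q,
      monoid.mult = (\<lambda>a b. heis_encode (heis_mult q (heis_decode a) (heis_decode b))),
      one = heis_encode (0, 0, 0)\<rparr>"

lemma heis_decode_encode: "t \<in> heis_residues q \<Longrightarrow> heis_decode (heis_encode t) = t"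
  by (auto simp: heis_decode_def heis_encode_def heis_residues_def)

lemma heis_residues_iff [simp]:
  "(x, y, z) \<in> heis_residues q \<longleftrightarrow> 0 \<le> x \<and> x < q \<and> 0 \<le> y \<and> y < q \<and> 0 \<le> z \<and> z < q"
  by (auto simp: heis_residues_def)

lemma heis_mult_residues: "q > 0 \<Longrightarrow> heis_mult q s t \<in> heis_residues q"
  by (cases s; cases t) simp

lemma mod_sum_mult_left_eq: "(a mod q + b + c mod q * d) mod q = (a + b + c * d) mod (q::int)"
proof -
  have "(a mod q + b + c mod q * d) mod q = ((a mod q + b) mod q + (c mod q * d) mod q) mod q"
    by (simp only: mod_add_eq)
  also have "\<dots> = ((a + b) mod q + (c * d) mod q) mod q"
    by (simp only: mod_add_left_eq mod_mult_left_eq)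
  finally show ?thesis by (simp only: mod_add_eq)
qed
lemma mod_sum_mult_right_eq: "(a + b mod q + c * (d mod q)) mod q = (a + b + c * d) mod (q::int)"
proof -
  have "(a + b mod q + c * (d mod q)) mod q = ((a + b mod q) mod q + (c * (d mod q)) mod q) mod q"
    by (simp only: mod_add_eq)
  also have "\<dots> = ((a + b) mod q + (c * d) mod q) mod q"
    by (simp only: mod_add_right_eq mod_mult_right_eq)
  finally show ?thesis by (simp only: mod_add_eq)
qed

lemma heis_mult_assoc: "heis_mult q (heis_mult q s t) u = heis_mult q s (heis_mult q t u)"
proof -
  obtain x y z x' y' z' x'' y'' z'' where stu: "s = (x, y, z)" "t = (x', y', z')" "u = (x'', y'', z'')"
    by (metis prod_cases3)
  have "((z + z' + x * y') mod q + z'' + (x + x') mod q * y'') mod q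
      = (z + z' + x * y' + z'' + (x + x') * y'') mod q"
    by (rule mod_sum_mult_left_eq)
  also have "\<dots> = (z + (z' + z'' + x' * y'') + x * (y' + y'')) mod q"
    by (simp add: algebra_simps)
  also have "\<dots> = (z + (z' + z'' + x' * y'') mod q + x * ((y' + y'') mod q)) mod q"
    by (rule mod_sum_mult_right_eq[symmetric])
  finally show ?thesis
    by (simp add: stu mod_add_left_eq mod_add_right_eq add.assoc)
qed

lemma heisenberg_mult:
  "s \<in> heis_residues q \<Longrightarrow> t \<in> heis_residues q \<Longrightarrow>
    heis_encode s \<otimes>\<^bsub>heisenberg q\<^esub> heis_encode t = heis_encode (heis_mult q s t)"
  by (simp add: heisenberg_def heis_decode_encode)

lemma heis_decode_encode_mult: "q > 0 \<Longrightarrow> heis_decode (heis_encode (heis_mult q s t)) = heis_mult q s t"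
  using heis_decode_encode heis_mult_residues by blast

lemma heisenberg_one: "\<one>\<^bsub>heisenberg q\<^esub> = heis_encode (0, 0, 0)"
  by (simp add: heisenberg_def)

lemma heisenberg_carrier: "t \<in> heis_residues q \<Longrightarrow> heis_encode t \<in> carrier (heisenberg q)"
  by (simp add: heisenberg_def)

lemma heis_mult_inverse:
  "heis_mult q ((- x) mod q, (- y) mod q, (x * y - z) mod q) (x, y, z) = (0, 0, 0)"
  using mod_sum_mult_left_eq[of "x * y - z" q z "- x" y] by (simp add: mod_simps)

lemma group_heisenberg: assumes "q > 1" shows "group (heisenberg q)"
proof (rule groupI)
  fix a b c assume "a \<in> carrier (heisenberg q)" "b \<in> carrier (heisenberg q)" "c \<in> carrier (heisenberg q)"
  then show "a \<otimes>\<^bsub>heisenberg q\<^esub> b \<otimes>\<^bsub>heisenberg q\<^esub> c = a \<otimes>\<^bsub>heisenberg q\<^esub> (b \<otimes>\<^bsub>heisenberg q\<^esub> c)"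
    using assms by (auto simp: heisenberg_def heis_decode_encode heis_decode_encode_mult heis_mult_assoc)
next
  fix a assume "a \<in> carrier (heisenberg q)"
  then obtain x y z where a: "a = heis_encode (x, y, z)" "(x, y, z) \<in> heis_residues q"
    by (auto simp: heisenberg_def)
  let ?b = "((- x) mod q, (- y) mod q, (x * y - z) mod q)"
  have "?b \<in> heis_residues q" using assms by simp
  then show "\<exists>b\<in>carrier (heisenberg q). b \<otimes>\<^bsub>heisenberg q\<^esub> a = \<one>\<^bsub>heisenberg q\<^esub>"
    using a by (intro bexI[of _ "heis_encode ?b"])
      (simp_all add: heisenberg_mult heisenberg_one heisenberg_carrier heis_mult_inverse del: heis_mult.simps)
  show "\<one>\<^bsub>heisenberg q\<^esub> \<otimes>\<^bsub>heisenberg q\<^esub> a = a"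
    using a assms by (simp add: heisenberg_mult heisenberg_one)
qed (use assms heis_mult_residues in \<open>auto simp: heisenberg_def\<close>)

lemma heisenberg_inv:
  assumes "q > 1" "(x, y, z) \<in> heis_residues q"
  shows "inv\<^bsub>heisenberg q\<^esub> heis_encode (x, y, z) = heis_encode ((- x) mod q, (- y) mod q, (x * y - z) mod q)"
proof -
  interpret group "heisenberg q" using assms(1) by (rule group_heisenberg)
  show ?thesis
    using assms by (intro inv_equality)
      (simp_all add: heisenberg_mult heisenberg_one heisenberg_carrier heis_mult_inverse del: heis_mult.simps)
qed

lemma heisenberg_pow:
  assumes "q > 1" "(x, y, z) \<in> heis_residues q" "x * y = 0"
  shows "heis_encode (x, y, z) [^]\<^bsub>heisenberg q\<^esub> (n::nat) =
    heis_encode (int n * x mod q, int n * y mod q, int n * z mod q)"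
proof (induction n)
  case 0
  then show ?case by (simp add: heisenberg_one)
next
  case (Suc n)
  have xy: "(int n * x) mod q * y = 0"
    using assms(3) by (cases "x = 0") simp_all
  have step: "(int n * w mod q + w) mod q = int (Suc n) * w mod q" for w
  proof -
    have "int (Suc n) * w = int n * w + w" by (simp add: algebra_simps)
    then show ?thesis by (simp only: mod_add_left_eq)
  qed
  have "heis_mult q (int n * x mod q, int n * y mod q, int n * z mod q) (x, y, z) =
      (int (Suc n) * x mod q, int (Suc n) * y mod q, int (Suc n) * z mod q)"
    by (simp only: heis_mult.simps xy add_0_right step)
  then show ?case
    using Suc assms by (simp add: heisenberg_mult del: heis_mult.simps)
qed

lemma heisenberg_commut:
  assumes "q > 1"
  shows "commut (heisenberg q) (heis_encode (0, 1, 0)) (heis_encode (1, 0, 0)) = heis_encode (0, 0, q - 1)"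
  using assms by (simp add: commut_def heisenberg_inv heisenberg_mult zmod_minus1)

lemma heisenberg_conjg_central:
  assumes "q > 1"
  shows "conjg (heisenberg q) (heis_encode (0, 0, q - 1)) (heis_encode (1, 0, 0)) = heis_encode (0, 0, q - 1)"
    and "conjg (heisenberg q) (heis_encode (0, 0, q - 1)) (heis_encode (0, 1, 0)) = heis_encode (0, 0, q - 1)"
  using assms by (simp_all add: conjg_def heisenberg_inv heisenberg_mult zmod_minus1)

lemma heisenberg_central_pow_eq_self:
  assumes "q > 1" "int r mod q = 1"
  shows "heis_encode (0, 0, q - 1) [^]\<^bsub>heisenberg q\<^esub> r = heis_encode (0, 0, q - 1)"
proof -
  have "int r * (q - 1) mod q = (int r mod q) * (q - 1) mod q" by (simp add: mod_mult_left_eq)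
  with assms show ?thesis by (simp add: heisenberg_pow zmod_minus1)
qed

lemma heisenberg_central_pow_eq_one:
  assumes "q > 1" "q dvd int r"
  shows "heis_encode (0, 0, q - 1) [^]\<^bsub>heisenberg q\<^esub> r = \<one>\<^bsub>heisenberg q\<^esub>"
  using assms by (simp add: heisenberg_pow heisenberg_one)

lemma heisenberg_generator_pow_eq_one:
  assumes "q > 1" "q dvd int r"
  shows "heis_encode (1, 0, 0) [^]\<^bsub>heisenberg q\<^esub> r = \<one>\<^bsub>heisenberg q\<^esub>"
    and "heis_encode (0, 1, 0) [^]\<^bsub>heisenberg q\<^esub> r = \<one>\<^bsub>heisenberg q\<^esub>"
  using assms by (simp_all add: heisenberg_pow heisenberg_one)

lemma of_int_mod_eq: "of_int q = (0 :: 'k::ring_1) \<Longrightarrow> of_int (x mod q) = (of_int x :: 'k)"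
  by (metis add.right_neutral minus_div_mult_eq_mod mult_zero_right of_int_diff of_int_mult diff_zero)

lemma heis_decode_mult:
  assumes "q > 0" "a \<in> carrier (heisenberg q)" "b \<in> carrier (heisenberg q)"
  shows "heis_decode (a \<otimes>\<^bsub>heisenberg q\<^esub> b) = heis_mult q (heis_decode a) (heis_decode b)"
  using assms by (auto simp: heisenberg_def heis_decode_encode heis_decode_encode_mult)

lemma quadratic_map_heisenberg_hom:
  assumes G: "group G" "finite (carrier G)" and q: "q > 1" and \<phi>: "\<phi> \<in> hom G (heisenberg q)"
    and char: "of_int q = (0 :: 'k::field)"
  shows "quadratic_map G (\<lambda>g. of_int (snd (snd (heis_decode (\<phi> g)))) :: 'k)
    (\<lambda>g. of_int (fst (heis_decode (\<phi> g)))) (\<lambda>g. of_int (fst (snd (heis_decode (\<phi> g)))))"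
proof (intro quadratic_map.intro quadratic_map_axioms.intro G)
  fix g h assume gh: "g \<in> carrier G" "h \<in> carrier G"
  interpret group_hom G "heisenberg q" \<phi>
    using G(1) group_heisenberg[OF q] \<phi> by (intro group_hom.intro group_hom_axioms.intro)
  obtain x y z x' y' z' where "heis_decode (\<phi> g) = (x, y, z)" "heis_decode (\<phi> h) = (x', y', z')"
    by (metis prod_cases3)
  moreover have "heis_decode (\<phi> (g \<otimes>\<^bsub>G\<^esub> h)) = heis_mult q (heis_decode (\<phi> g)) (heis_decode (\<phi> h))"
    using gh q by (simp add: hom_mult heis_decode_mult)
  ultimately show "of_int (snd (snd (heis_decode (\<phi> (g \<otimes>\<^bsub>G\<^esub> h))))) =
      of_int (snd (snd (heis_decode (\<phi> g)))) + of_int (snd (snd (heis_decode (\<phi> h))))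
      + of_int (fst (heis_decode (\<phi> g))) * (of_int (fst (snd (heis_decode (\<phi> h)))) :: 'k)"
    and "of_int (fst (heis_decode (\<phi> (g \<otimes>\<^bsub>G\<^esub> h)))) =
      of_int (fst (heis_decode (\<phi> g))) + (of_int (fst (heis_decode (\<phi> h))) :: 'k)"
    by (simp_all add: of_int_mod_eq[OF char])
qed

section \<open>Presented groups\<close>

lemma one_plus_power_mod_self:
  assumes "k > 0" shows "(1 + p ^ k) mod p = 1 mod (p::nat)"
proof -
  have "p ^ k mod p = 0" using assms by (simp add: dvd_imp_mod_0)
  then show ?thesis by (metis mod_add_right_eq add_0_right)
qed

lemma r1_of_mod: "o1 < m \<Longrightarrow> r1_of p m o1 mod p = 1 mod p"
  unfolding r1_of_def by (rule one_plus_power_mod_self) simp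

lemma r2_of_mod:
  assumes "o1 < m" "o2 < m" shows "r2_of p m o1 o2 mod p = 1 mod p"
proof (cases "o2 > o1")
  case True
  then show ?thesis unfolding r2_of_def using assms one_plus_power_mod_self[of "m - o2" p] by simp
next
  case False
  have "r1_of p m o1 ^ p ^ (o1 - o2) mod p = (r1_of p m o1 mod p) ^ p ^ (o1 - o2) mod p"
    by (simp add: power_mod)
  also have "\<dots> = 1 mod p" using assms by (simp add: r1_of_mod power_mod)
  finally show ?thesis using False by (simp add: r2_of_def)
qed

lemma pres_rel_heisenberg:
  assumes "p > 1" "n1 > 0" "n2 > 0" "o1 < m" "o2 < m" "o1' < m" "o2' < m"
  shows "pres_rel p m n1 n2 o1 o2 o1' o2' u1 u2 (heisenberg (int p)) (heis_encode (1, 0, 0)) (heis_encode (0, 1, 0))"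
proof -
  have q: "int p > 1" using assms(1) by simp
  have dvd: "int p dvd int (u * p ^ k)" if "k > 0" for u k
    using that by (simp add: int_dvd_int_iff)
  have r: "int (r1_of p m o1) mod int p = 1" "int (r2_of p m o1 o2) mod int p = 1"
    using r1_of_mod[OF assms(4), of p] r2_of_mod[OF assms(4,5), of p] assms(1)
    by (simp_all add: zmod_int[symmetric])
  show ?thesis
    unfolding pres_rel_def Let_def heisenberg_commut[OF q] heisenberg_conjg_central[OF q]
    using assms q dvd[of _ 1] dvd[of "m - o1'"] dvd[of "m - o2'"] r
    by (simp add: heisenberg_carrier heisenberg_central_pow_eq_self heisenberg_central_pow_eq_one
        heisenberg_generator_pow_eq_one)
qed

text \<open>Translating by \<open>1\<close> permutes a finite ring, so \<open>\<Sum>y = \<Sum>(y + 1)\<close>.\<close>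
lemma of_nat_card_UNIV_eq_0: "of_nat (card (UNIV :: 'k::{ring_1,finite} set)) = (0 :: 'k)"
proof -
  have "(\<Sum>y\<in>UNIV. y + 1) = (\<Sum>y\<in>UNIV. y :: 'k)"
    by (rule sum.reindex_bij_witness[of _ "\<lambda>y. y - 1" "\<lambda>y. y + 1"]) auto
  then show ?thesis by (simp add: sum.distrib)
qed

lemma inv_conditions_bounds:
  assumes "inv_conditions p m n1 n2 o1 o2 o1' o2' u1 u2"
  shows "0 < n1" "0 < n2" "o1 < m" "o2 < m"
proof -
  have "int n1 \<ge> int n2 \<and> int n2 \<ge> 1 \<and> int o1 < min (int m) (int n1) \<and> int o2 < min (int m) (int n2)"
    using assms unfolding inv_conditions_def Let_def by blast
  then show "0 < n1" "0 < n2" "o1 < m" "o2 < m" by auto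
qed

lemma (in group) commut_in_derived:
  assumes "g \<in> carrier G" "h \<in> carrier G"
  shows "commut G g h \<in> derived G (carrier G)"
proof -
  have "inv g \<otimes> inv h \<otimes> inv (inv g) \<otimes> inv (inv h) \<in> derived_set G (carrier G)"
    using assms by blast
  then show ?thesis
    using assms unfolding commut_def derived_def by (auto intro: generate.incl)
qed

lemma presented_group_quadratic_map:
  fixes \<Gamma> :: "('a, 'b) monoid_scheme"
  assumes pres: "is_presented_by p m n1 n2 o1 o2 o1' o2' u1 u2 \<Gamma>" and fin: "finite (carrier \<Gamma>)"
    and p: "p > 1" and char: "of_nat p = (0 :: 'k)"
    and n: "0 < n1" "0 < n2" and o: "o1 < m" "o2 < m" "o1' < m" "o2' < m"
  obtains F \<xi> \<eta> :: "'a \<Rightarrow> 'k::field" and a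
  where "quadratic_map \<Gamma> F \<xi> \<eta>" "a \<in> derived \<Gamma> (carrier \<Gamma>)" "F a \<noteq> F \<one>\<^bsub>\<Gamma>\<^esub>"
proof -
  let ?H = "heisenberg (int p)"
  obtain b1 b2 where grp: "group \<Gamma>" and rel: "pres_rel p m n1 n2 o1 o2 o1' o2' u1 u2 \<Gamma> b1 b2"
    and univ: "\<forall>(H :: nat monoid) h1 h2. group H \<and> pres_rel p m n1 n2 o1 o2 o1' o2' u1 u2 H h1 h2
      \<longrightarrow> (\<exists>\<phi>\<in>hom \<Gamma> H. \<phi> b1 = h1 \<and> \<phi> b2 = h2)"
    using pres unfolding is_presented_by_def by blast
  have b: "b1 \<in> carrier \<Gamma>" "b2 \<in> carrier \<Gamma>" using rel by (simp_all add: pres_rel_def)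
  have q: "int p > 1" using p by simp
  obtain \<phi> where \<phi>: "\<phi> \<in> hom \<Gamma> ?H" "\<phi> b1 = heis_encode (1, 0, 0)" "\<phi> b2 = heis_encode (0, 1, 0)"
    using univ group_heisenberg[OF q] pres_rel_heisenberg[OF p n o] by blast
  interpret group_hom \<Gamma> ?H \<phi>
    using grp group_heisenberg[OF q] \<phi>(1) by (intro group_hom.intro group_hom_axioms.intro)
  define F :: "'a \<Rightarrow> 'k" where "F g = of_int (snd (snd (heis_decode (\<phi> g))))" for g
  have charq: "of_int (int p) = (0 :: 'k)" using char by simp
  have qm: "quadratic_map \<Gamma> F (\<lambda>g. of_int (fst (heis_decode (\<phi> g))))
      (\<lambda>g. of_int (fst (snd (heis_decode (\<phi> g)))))"
    unfolding F_def using quadratic_map_heisenberg_hom[OF grp fin q \<phi>(1) charq] .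
  have "\<phi> (commut \<Gamma> b2 b1) = heis_encode (0, 0, int p - 1)"
    using b \<phi>(2,3) heisenberg_commut[OF q] by (simp add: commut_def hom_mult hom_inv)
  moreover have "heis_decode (heis_encode (0, 0, int p - 1)) = (0, 0, int p - 1)"
    using q by (intro heis_decode_encode[where q = "int p"]) simp
  ultimately have "F (commut \<Gamma> b2 b1) = - 1" using charq by (simp add: F_def)
  moreover have "F \<one>\<^bsub>\<Gamma>\<^esub> = 0" using q by (simp add: F_def heisenberg_one heis_decode_encode[of _ "int p"])
  ultimately show ?thesis
    by (intro that[OF qm group.commut_in_derived[OF grp b(2,1)]]) simp
qed

theorem mainTheorem11:
  fixes \<Gamma> :: "('a, 'b) monoid_scheme"
    and p m n1 n2 o1 o2 o1' o2' u1 u2 :: nat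
  assumes "Factorial_Ring.prime p" and "odd p"
    and "card (UNIV :: ('k::{field,finite}) set) = p"
    and "is_p_group p \<Gamma>" and "\<not> comm_group \<Gamma>" and "two_generated \<Gamma>"
    and "cyclic_subgroup \<Gamma> (derived \<Gamma> (carrier \<Gamma>))"
    and "inv_conditions p m n1 n2 o1 o2 o1' o2' u1 u2"
    and "is_presented_by p m n1 n2 o1 o2 o1' o2' u1 u2 \<Gamma>"
    and "o1 \<noteq> o2" and "0 < max o1' o2'" and "max o1' o2' < m" and "n2 \<ge> 2"
  defines "I\<Gamma> \<equiv> (aug_ideal \<Gamma> (carrier \<Gamma>) :: ('a \<Rightarrow> 'k) set)"
    and "I\<Gamma>' \<equiv> (aug_ideal \<Gamma> (derived \<Gamma> (carrier \<Gamma>)) :: ('a \<Rightarrow> 'k) set)"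
  defines "A \<equiv> set_mult \<Gamma> I\<Gamma>' (grp_alg \<Gamma>)"
    and "B \<equiv> set_mult \<Gamma> I\<Gamma>' I\<Gamma>"
    and "D \<equiv> set_mult \<Gamma> (set_mult \<Gamma> I\<Gamma> I\<Gamma>) I\<Gamma>"
  shows "nat_proj_welldef A B D
    \<and> bij_betw (nat_proj A B D) (quot_sp A B) (quot_sp (set_add A D) D)
    \<and> card (quot_sp A B) = p \<and> card (quot_sp (set_add A D) D) = p"
proof -
  have grp: "group \<Gamma>" and fin: "finite (carrier \<Gamma>)" using assms(4) by (auto simp: is_p_group_def)
  interpret group \<Gamma> by (rule grp)
  have p: "p > 1" using assms(1) prime_gt_1_nat by blast
  have char: "of_nat p = (0 :: 'k)" using of_nat_card_UNIV_eq_0 assms(3) by metis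
  have o': "o1' < m" "o2' < m" using assms(12) by auto
  obtain F \<xi> \<eta> :: "'a \<Rightarrow> 'k" and a where "quadratic_map \<Gamma> F \<xi> \<eta>"
    and a: "a \<in> derived \<Gamma> (carrier \<Gamma>)" "F a \<noteq> F \<one>\<^bsub>\<Gamma>\<^esub>"
    by (rule presented_group_quadratic_map[OF assms(9) fin p char inv_conditions_bounds[OF assms(8)] o'])
  then interpret quadratic_map \<Gamma> F \<xi> \<eta> by simp
  obtain g where g: "g \<in> derived \<Gamma> (carrier \<Gamma>)" and gen: "derived \<Gamma> (carrier \<Gamma>) = generate \<Gamma> {g}"
    using assms(7) unfolding cyclic_subgroup_def by blast
  have gc: "g \<in> carrier \<Gamma>" using g derived_in_carrier[OF subset_refl] by blast
  have e: "ga_diff g \<one>\<^bsub>\<Gamma>\<^esub> \<in> A"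
    using ga_diff_one_in_aug_ideal[OF derived_is_subgroup[OF subset_refl] fin g]
      aug_ideal_subset_set_mult_grp_alg[OF fin] unfolding A_def I\<Gamma>'_def by blast
  show ?thesis
    unfolding assms(3)[symmetric]
  proof (rule nat_proj_bij_line[OF _ _ _ _ e, where G = \<Gamma> and \<Phi> = F])
    show "fun_subspace A" unfolding A_def by (rule fun_subspace_set_mult[OF fun_subspace_grp_alg])
    show "fun_subspace B" unfolding B_def I\<Gamma>_def by (rule fun_subspace_set_mult[OF fun_subspace_aug_ideal])
    show "fun_subspace D" unfolding D_def I\<Gamma>_def by (rule fun_subspace_set_mult[OF fun_subspace_aug_ideal])
    show "B \<subseteq> D" unfolding B_def D_def I\<Gamma>_def I\<Gamma>'_def
      by (rule set_mult_mono[OF aug_ideal_derived_subset_aug_sq[OF fin]])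
    show "A \<subseteq> line_plus (ga_diff g \<one>\<^bsub>\<Gamma>\<^esub>) B" unfolding A_def B_def I\<Gamma>_def I\<Gamma>'_def gen
      by (rule set_mult_aug_generate_single_subset[OF fin gc])
    show "linear_ext \<Gamma> F u = 0" if "u \<in> D" for u
      using that unfolding D_def I\<Gamma>_def by (rule linear_ext_aug_cube)
    show "linear_ext \<Gamma> F (ga_diff g \<one>\<^bsub>\<Gamma>\<^esub>) \<noteq> 0"
      by (rule linear_ext_generator_neq_0[OF gen gc a])
  qed
qed

end
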